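(* For $N\in\omega$ let $T_N=\{0,1\}^{\le N}$ be the set of $0$-$1$ sequences of length at most $N$ (including the empty sequence); for $s\in\{0,1\}^N$ let $F_s=\{s{\upharpoonright}k: k\le N\}\subseteq T_N$, and let $\mathcal{F}_N$ be the hereditary closure of $\{F_s: s\in\{0,1\}^N\}$. Let $x=\sum_{s\in\{0,1\}^N}\chi_{F_s}\in\mathbb{R}^{T_N}$. Then $\lVert x\rVert^{\mathcal{F}_N}=2^N(1+N/2)$, while $\lVert\chi_{F_s}\rVert^{\mathcal{F}_N}=1$ for each $s$. Consequently, if $T$ is the disjoint union of the sets $T_N$ ($N\in\omega$) (identified with $\omega$ via a bijection) and $\mathcal{F}=\bigcup_N\mathcal{F}_N$, then $\mathcal{F}$ is a compact hereditary family of finite sets covering $T$, there is no constant $C>0$ such that $\lVert\sum_{i\le n}x_i\rVert^{\mathcal{F}}\le C\sum_{i\le n}\lVert x_i\rVert^{\mathcal{F}}$ for all finite families $x_1,\dots,x_n\in c_{00}$, and $X^\mathcal{F}$ is not isomorphic to $X_\mathcal{F}^*$.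
   Context: For a countable index set $I$ and a family $\mathcal{F}$ of finite subsets of $I$ (hereditary: closed under subsets; covering $I$), a partition is a family $\mathcal{P}$ of subsets of $I$ with $\emptyset\in\mathcal{P}$, $\bigcup\mathcal{P}=I$, elements pairwise disjoint; $\mathbb{P}_\mathcal{F}$ is the set of partitions contained in $\mathcal{F}$; for $x\in\mathbb{R}^I$, $\lVert x\rVert^{\mathcal{F}}=\inf_{\mathcal{P}\in\mathbb{P}_\mathcal{F}}\sum_{F\in\mathcal{P}}\sup_{k\in F}|x(k)|$. The hereditary closure of a family is the smallest hereditary family containing it. $\chi_A$ is the characteristic function of $A$. $X^\mathcal{F}$ is the completion of $c_{00}$ (finitely supported sequences) under $\lVert\cdot\rVert^\mathcal{F}$, $X_\mathcal{F}$ the completion of $c_{00}$ under $\lVert x\rVert_\mathcal{F}=\sup_{F\in\mathcal{F}}\sum_{k\in F}|x(k)|$, and $X_\mathcal{F}^*$ its dual. Compactness refers to the topology of $2^I$. *)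

theory Defs
  imports "HOL-Analysis.Analysis"
begin

definition hereditary :: "'i set set \<Rightarrow> bool" where
  "hereditary Fam \<longleftrightarrow> (\<forall>A\<in>Fam. \<forall>B. B \<subseteq> A \<longrightarrow> B \<in> Fam)"

definition hered_closure :: "'i set set \<Rightarrow> 'i set set" where
  "hered_closure Fam = \<Inter>{G. hereditary G \<and> Fam \<subseteq> G}"

definition covers :: "'i set \<Rightarrow> 'i set set \<Rightarrow> bool" where
  "covers I Fam \<longleftrightarrow> (\<forall>A\<in>Fam. A \<subseteq> I) \<and> \<Union>Fam = I"

definition partitions :: "'i set \<Rightarrow> 'i set set set" where
  "partitions I = {P. {} \<in> P \<and> \<Union>P = I \<and> pairwise disjnt P}"

(* sup_{k in F} |x k|, with the convention 0 for F = {} (F is always finite here) *)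
definition supabs :: "('i \<Rightarrow> real) \<Rightarrow> 'i set \<Rightarrow> real" where
  "supabs x F = (if F = {} then 0 else Max ((\<lambda>k. \<bar>x k\<bar>) ` F))"

(* the upper norm ||x||^F, valued in [0,\<infinity>] (sum of non-negative terms over a possibly infinite partition) *)
definition upper_norm :: "'i set \<Rightarrow> 'i set set \<Rightarrow> ('i \<Rightarrow> real) \<Rightarrow> ennreal" where
  "upper_norm I Fam x =
     (INF P \<in> {P \<in> partitions I. P \<subseteq> Fam}. (\<Sum>\<^sub>\<infinity>F\<in>P. ennreal (supabs x F)))"

definition c00 :: "'i set \<Rightarrow> ('i \<Rightarrow> real) set" where
  "c00 I = {x. finite {k. x k \<noteq> 0} \<and> {k. x k \<noteq> 0} \<subseteq> I}"

definition lower_norm :: "'i set set \<Rightarrow> ('i \<Rightarrow> real) \<Rightarrow> ennreal" where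
  "lower_norm Fam x = (SUP F \<in> Fam. ennreal (\<Sum>k\<in>F. \<bar>x k\<bar>))"

(* the dual X_F^*: a bounded functional on X_F is determined by its values y k on unit vectors;
   dual norm = sup over the (dense) unit ball of c00 *)
definition dual_norm :: "'i set \<Rightarrow> 'i set set \<Rightarrow> ('i \<Rightarrow> real) \<Rightarrow> ennreal" where
  "dual_norm I Fam y = (SUP x \<in> {x \<in> c00 I. lower_norm Fam x \<le> 1}.
       ennreal \<bar>\<Sum>k\<in>{k. x k \<noteq> 0}. x k * y k\<bar>)"

definition dual_space :: "'i set \<Rightarrow> 'i set set \<Rightarrow> ('i \<Rightarrow> real) set" where
  "dual_space I Fam = {y. (\<forall>k. k \<notin> I \<longrightarrow> y k = 0) \<and> dual_norm I Fam y < \<infinity>}"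

(* X^F (completion of c00 under ||.||^F) is isomorphic to X_F^*:
   a linear map on the dense subspace c00, bounded above and below, with dense range *)
definition upper_iso_dual :: "'i set \<Rightarrow> 'i set set \<Rightarrow> bool" where
  "upper_iso_dual I Fam \<longleftrightarrow>
    (\<exists>T c C. c > 0 \<and> C > 0 \<and>
       (\<forall>x\<in>c00 I. T x \<in> dual_space I Fam) \<and>
       (\<forall>x\<in>c00 I. \<forall>y\<in>c00 I. \<forall>a b::real. T (\<lambda>k. a * x k + b * y k) = (\<lambda>k. a * T x k + b * T y k)) \<and>
       (\<forall>x\<in>c00 I. ennreal c * upper_norm I Fam x \<le> dual_norm I Fam (T x)
                 \<and> dual_norm I Fam (T x) \<le> ennreal C * upper_norm I Fam x) \<and>
       (\<forall>y\<in>dual_space I Fam. \<forall>e>0. \<exists>x\<in>c00 I. dual_norm I Fam (\<lambda>k. y k - T x k) < ennreal e))"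

definition compact_family :: "'i set \<Rightarrow> 'i set set \<Rightarrow> bool" where
  "compact_family I Fam \<longleftrightarrow>
     compactin (product_topology (\<lambda>_. discrete_topology (UNIV::bool set)) I)
               ((\<lambda>A. \<lambda>i\<in>I. i \<in> A) ` Fam)"

definition TN :: "nat \<Rightarrow> bool list set" where
  "TN N = {s. length s \<le> N}"

definition Fs :: "bool list \<Rightarrow> bool list set" where
  "Fs s = {take k s | k. k \<le> length s}"

definition FamN :: "nat \<Rightarrow> bool list set set" where
  "FamN N = hered_closure {Fs s | s. length s = N}"

definition xN :: "nat \<Rightarrow> bool list \<Rightarrow> real" where
  "xN N = (\<lambda>t. \<Sum>s\<in>{s. length s = N}. indicator (Fs s) t)"

definition Tall :: "(nat \<times> bool list) set" where
  "Tall = (SIGMA N:UNIV. TN N)"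

definition Famall :: "(nat \<times> bool list) set set" where
  "Famall = (\<Union>N. (\<lambda>A. Pair N ` A) ` FamN N)"

end

(* Lower bound: weight the nodes of T_N so that on every branch the nodes of lengths
   k, ..., N carry total weight 2^(N-k), the value of x at the node of length k.  A set of
   F_N lies on one branch, so its weight is at most the maximum of x on it, and every
   admissible partition costs at least the total weight 2^N (1 + N/2).
   Upper bound: partition T_N according to the sequence left after deleting trailing zeros;
   the class of t lies on one branch and x is at most 2^(N-|t|) on it, which sums to the
   same total.
   The 2^N indicators of the sets F_s have norm 1 and sum to x, and the weight argument
   works verbatim for the copy of T_N inside T, so no constant C exists for T; an
   isomorphism of X^F onto the dual of X_F would provide one, as the dual norm is
   subadditive. *)

theory Submission
  imports Defs
begin

section \<open>Hereditary families and the upper norm\<close>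

lemma hered_closure_eq: "hered_closure G = {B. \<exists>A\<in>G. B \<subseteq> A}"
proof
  have "hereditary {B. \<exists>A\<in>G. B \<subseteq> A}" unfolding hereditary_def by blast
  then show "hered_closure G \<subseteq> {B. \<exists>A\<in>G. B \<subseteq> A}"
    unfolding hered_closure_def by blast
  show "{B. \<exists>A\<in>G. B \<subseteq> A} \<subseteq> hered_closure G"
    unfolding hered_closure_def hereditary_def by blast
qed

lemma finite_sum_le_infsum_ennreal:
  fixes f :: "'a \<Rightarrow> ennreal"
  assumes "finite B" "B \<subseteq> A"
  shows "sum f B \<le> (\<Sum>\<^sub>\<infinity>x\<in>A. f x)"
proof -
  have "sum f B = (\<Sum>\<^sub>\<infinity>x\<in>B. f x)" using assms(1) by simp
  also have "\<dots> \<le> (\<Sum>\<^sub>\<infinity>x\<in>A. f x)"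
    by (rule infsum_mono_neutral) (use assms in \<open>auto intro: nonneg_summable_on_complete\<close>)
  finally show ?thesis .
qed

lemma supabs_nonneg: "finite A \<Longrightarrow> 0 \<le> supabs x A"
  unfolding supabs_def by (auto intro: order.trans[OF abs_ge_zero Max_ge])

lemma abs_le_supabs: "finite A \<Longrightarrow> a \<in> A \<Longrightarrow> \<bar>x a\<bar> \<le> supabs x A"
  unfolding supabs_def by auto

lemma supabs_le:
  assumes "finite A" "0 \<le> c" "\<And>a. a \<in> A \<Longrightarrow> \<bar>x a\<bar> \<le> c"
  shows "supabs x A \<le> c"
  using assms unfolding supabs_def by auto

lemma supabs_image:
  assumes "\<And>a. a \<in> A \<Longrightarrow> y a = x (f a)"
  shows "supabs y A = supabs x (f ` A)"
proof -
  have "(\<lambda>a. \<bar>y a\<bar>) ` A = (\<lambda>t. \<bar>x t\<bar>) ` f ` A"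
    unfolding image_image by (rule image_cong) (simp_all add: assms)
  then show ?thesis unfolding supabs_def by simp
qed

lemma upper_norm_le_partition:
  "P \<in> partitions I \<Longrightarrow> P \<subseteq> Fam \<Longrightarrow> upper_norm I Fam x \<le> (\<Sum>\<^sub>\<infinity>F\<in>P. ennreal (supabs x F))"
  unfolding upper_norm_def by (rule INF_lower) simp

lemma upper_norm_le_fibers:
  assumes "finite I" "{} \<in> Fam" "\<And>t. t \<in> f ` I \<Longrightarrow> {v \<in> I. f v = t} \<in> Fam"
  shows "upper_norm I Fam x \<le> ennreal (\<Sum>t\<in>f ` I. supabs x {v \<in> I. f v = t})"
proof -
  define fiber where "fiber t = {v \<in> I. f v = t}" for t
  define P where "P = insert {} (fiber ` f ` I)"
  have "P \<in> partitions I"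
    unfolding partitions_def P_def fiber_def pairwise_def disjnt_def by auto
  moreover have "P \<subseteq> Fam" using assms(2,3) unfolding P_def fiber_def by auto
  ultimately have "upper_norm I Fam x \<le> (\<Sum>\<^sub>\<infinity>F\<in>P. ennreal (supabs x F))"
    by (rule upper_norm_le_partition)
  also have "\<dots> = (\<Sum>F\<in>fiber ` f ` I. ennreal (supabs x F))"
    using assms(1) by (simp add: P_def sum.insert_if supabs_def)
  also have "\<dots> = (\<Sum>t\<in>f ` I. ennreal (supabs x (fiber t)))"
    by (rule sum.reindex_cong[where l = fiber]) (auto simp: inj_on_def fiber_def)
  also have "\<dots> = ennreal (\<Sum>t\<in>f ` I. supabs x (fiber t))"
    using assms(1) by (simp add: sum_ennreal fiber_def supabs_nonneg)
  finally show ?thesis unfolding fiber_def .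
qed

lemma upper_norm_ge_weight_sum:
  fixes W :: "'i \<Rightarrow> real"
  assumes "finite J" "J \<subseteq> I" "\<And>v. v \<in> J \<Longrightarrow> 0 \<le> W v"
    and "\<And>A. A \<in> Fam \<Longrightarrow> A \<inter> J \<noteq> {} \<Longrightarrow> (\<Sum>v\<in>A \<inter> J. W v) \<le> supabs x A"
  shows "ennreal (\<Sum>v\<in>J. W v) \<le> upper_norm I Fam x"
  unfolding upper_norm_def
proof (rule INF_greatest, clarify)
  fix P assume P: "P \<in> partitions I" "P \<subseteq> Fam"
  define P' where "P' = {A \<in> P. A \<inter> J \<noteq> {}}"
  have disj: "A = B" if "A \<in> P" "B \<in> P" "A \<inter> B \<noteq> {}" for A B
    using P(1) that unfolding partitions_def pairwise_def disjnt_def by blast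
  have "inj_on (\<lambda>A. A \<inter> J) P'" using disj unfolding P'_def inj_on_def by blast
  moreover have "finite ((\<lambda>A. A \<inter> J) ` P')"
    by (rule finite_subset[of _ "Pow J"]) (use assms(1) in auto)
  ultimately have finP': "finite P'" by (metis finite_imageD)
  have J_eq: "(\<Union>A\<in>P'. A \<inter> J) = J"
    using P(1) assms(2) unfolding partitions_def P'_def by blast
  have weight_le: "(\<Sum>v\<in>A \<inter> J. W v) \<le> supabs x A" if "A \<in> P'" for A
    using assms(4) P(2) that unfolding P'_def by blast
  have "(\<Sum>v\<in>(\<Union>A\<in>P'. A \<inter> J). W v) = (\<Sum>A\<in>P'. \<Sum>v\<in>A \<inter> J. W v)"
    by (rule sum.UNION_disjoint) (use finP' assms(1) disj in \<open>auto simp: P'_def\<close>)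
  then have "(\<Sum>v\<in>J. W v) = (\<Sum>A\<in>P'. \<Sum>v\<in>A \<inter> J. W v)" by (simp only: J_eq)
  also have "\<dots> \<le> (\<Sum>A\<in>P'. supabs x A)" by (rule sum_mono) (rule weight_le)
  finally have "ennreal (\<Sum>v\<in>J. W v) \<le> ennreal (\<Sum>A\<in>P'. supabs x A)" by (rule ennreal_leI)
  also have "\<dots> = (\<Sum>A\<in>P'. ennreal (supabs x A))"
    by (rule sum_ennreal[symmetric])
      (use weight_le assms(3) in \<open>meson order.trans sum_nonneg IntD2\<close>)
  also have "\<dots> \<le> (\<Sum>\<^sub>\<infinity>A\<in>P. ennreal (supabs x A))"
    by (rule finite_sum_le_infsum_ennreal[OF finP']) (auto simp: P'_def)
  finally show "ennreal (\<Sum>v\<in>J. W v) \<le> (\<Sum>\<^sub>\<infinity>A\<in>P. ennreal (supabs x A))" .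
qed

lemma upper_norm_indicator:
  assumes "hereditary Fam" "covers I Fam" "\<forall>B\<in>Fam. finite B" "A \<in> Fam" "A \<noteq> {}"
  shows "upper_norm I Fam (indicator A) = 1"
proof (rule antisym)
  have AI: "A \<subseteq> I" using assms(2,4) unfolding covers_def by blast
  have singleton: "{i} \<in> Fam" if "i \<in> I" for i
    using assms(1,2) that unfolding covers_def hereditary_def by blast
  have empty: "{} \<in> Fam" using assms(1,4) unfolding hereditary_def by blast
  define P where "P = insert {} (insert A ((\<lambda>i. {i}) ` (I - A)))"
  have "P \<in> partitions I"
    using AI unfolding partitions_def P_def pairwise_def disjnt_def by auto
  moreover have "P \<subseteq> Fam" using assms(4) singleton empty unfolding P_def by auto
  ultimately have "upper_norm I Fam (indicator A) \<le> (\<Sum>\<^sub>\<infinity>F\<in>P. ennreal (supabs (indicator A) F))"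
    by (rule upper_norm_le_partition)
  also have "\<dots> = (\<Sum>\<^sub>\<infinity>F\<in>{A}. ennreal (supabs (indicator A) F))"
    by (rule infsum_cong_neutral) (auto simp: P_def supabs_def)
  also have "\<dots> = 1"
  proof -
    have "(\<lambda>k. \<bar>indicator A k :: real\<bar>) ` A = {1}" using assms(5) by auto
    then show ?thesis using assms(5) by (simp add: supabs_def)
  qed
  finally show "upper_norm I Fam (indicator A) \<le> 1" .
next
  obtain a where a: "a \<in> A" using assms(5) by blast
  have "ennreal (\<Sum>v\<in>{a}. 1) \<le> upper_norm I Fam (indicator A)"
  proof (rule upper_norm_ge_weight_sum)
    show "{a} \<subseteq> I" using a assms(2,4) unfolding covers_def by blast
    fix B assume "B \<in> Fam" "B \<inter> {a} \<noteq> {}"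
    then have "(\<Sum>v\<in>B \<inter> {a}. 1) = \<bar>indicator A a :: real\<bar>" using a by auto
    also have "\<dots> \<le> supabs (indicator A) B"
      using \<open>B \<in> Fam\<close> \<open>B \<inter> {a} \<noteq> {}\<close> assms(3) by (intro abs_le_supabs) auto
    finally show "(\<Sum>v\<in>B \<inter> {a}. 1) \<le> supabs (indicator A) B" .
  qed simp_all
  then show "1 \<le> upper_norm I Fam (indicator A)" by simp
qed

lemma openin_cylinder_True:
  assumes "finite B"
  shows "openin (product_topology (\<lambda>_. discrete_topology (UNIV :: bool set)) I)
           (PiE I (\<lambda>i. if i \<in> B then {True} else UNIV))"
proof -
  have "finite {i \<in> I. (if i \<in> B then {True} else UNIV) \<noteq> topspace (discrete_topology (UNIV :: bool set))}"
    by (rule finite_subset[OF _ assms]) auto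
  then show ?thesis unfolding openin_PiE_gen by simp
qed

lemma closedin_if_finite_character:
  assumes "hereditary Fam"
    and "\<And>A. A \<subseteq> I \<Longrightarrow> A \<notin> Fam \<Longrightarrow> \<exists>B. finite B \<and> B \<subseteq> A \<and> B \<notin> Fam"
  shows "closedin (product_topology (\<lambda>_. discrete_topology (UNIV :: bool set)) I)
           ((\<lambda>A. \<lambda>i\<in>I. i \<in> A) ` Fam)"
proof -
  let ?X = "product_topology (\<lambda>_. discrete_topology (UNIV :: bool set)) I"
  let ?g = "\<lambda>A. \<lambda>i\<in>I. i \<in> A"
  have "openin ?X (topspace ?X - ?g ` Fam)"
  proof (subst openin_subopen, rule ballI)
    fix f assume f: "f \<in> topspace ?X - ?g ` Fam"
    define A where "A = {i \<in> I. f i}"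
    have f_ext: "f \<in> extensional I" using f by (simp add: PiE_def)
    have "f = ?g A"
    proof
      fix i show "f i = ?g A i"
        using extensional_arb[OF f_ext, of i] by (cases "i \<in> I") (simp_all add: A_def)
    qed
    then have "A \<notin> Fam" using DiffD2[OF f] by blast
    moreover have "A \<subseteq> I" unfolding A_def by blast
    ultimately obtain B where B: "finite B" "B \<subseteq> A" "B \<notin> Fam" using assms(2) by blast
    define U where "U = PiE I (\<lambda>i. if i \<in> B then {True} else UNIV)"
    have "f \<in> U" using B(2) f_ext unfolding U_def A_def PiE_iff by auto
    moreover have "U \<subseteq> topspace ?X - ?g ` Fam"
    proof
      fix h assume h: "h \<in> U"
      have "B \<subseteq> C" if "h = ?g C" for C
      proof
        fix i assume "i \<in> B"
        moreover have i: "i \<in> I" using \<open>i \<in> B\<close> B(2) unfolding A_def by blast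
        then have "h i \<in> (if i \<in> B then {True} else UNIV)" using h unfolding U_def PiE_iff by blast
        ultimately show "i \<in> C" using that i by simp
      qed
      then have "h \<notin> ?g ` Fam" using B(3) assms(1) unfolding hereditary_def by blast
      moreover have "h \<in> topspace ?X" using h unfolding U_def by (simp add: PiE_iff)
      ultimately show "h \<in> topspace ?X - ?g ` Fam" by blast
    qed
    ultimately show "\<exists>U. openin ?X U \<and> f \<in> U \<and> U \<subseteq> topspace ?X - ?g ` Fam"
      using openin_cylinder_True[OF B(1)] unfolding U_def by blast
  qed
  moreover have "?g ` Fam \<subseteq> topspace ?X" by auto
  ultimately show ?thesis unfolding closedin_def by blast
qed

lemma compact_family_if_finite_character:
  assumes "hereditary Fam"
    and "\<And>A. A \<subseteq> I \<Longrightarrow> A \<notin> Fam \<Longrightarrow> \<exists>B. finite B \<and> B \<subseteq> A \<and> B \<notin> Fam"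
  shows "compact_family I Fam"
  unfolding compact_family_def
  by (rule closedin_compact_space[OF _ closedin_if_finite_character[OF assms]])
    (simp add: compact_space_product_topology compact_space_discrete_topology)

section \<open>The finite trees \<open>T\<^sub>N\<close>\<close>

lemma mem_Fs: "t \<in> Fs s \<longleftrightarrow> take (length t) s = t"
  unfolding Fs_def by (auto simp: min_def) (metis length_take min.absorb4 nat_le_linear take_all)

lemma finite_Fs: "finite (Fs s)"
  unfolding Fs_def by simp

lemma Nil_in_Fs: "[] \<in> Fs s"
  by (simp add: mem_Fs)

lemma Fs_subset_TN: "length s = N \<Longrightarrow> Fs s \<subseteq> TN N"
  unfolding Fs_def TN_def by auto

lemma TN_subset_Union_Fs: "t \<in> TN N \<Longrightarrow> \<exists>s. length s = N \<and> t \<in> Fs s"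
  unfolding TN_def by (intro exI[of _ "t @ replicate (N - length t) False"]) (simp add: mem_Fs)

lemma TN_eq: "TN N = {u. length u < Suc N}"
  unfolding TN_def by auto

lemma finite_lists_bool_length_eq: "finite {u :: bool list. length u = n}"
  using finite_lists_length_eq[of "UNIV :: bool set" n] by simp

lemma finite_lists_bool_length_less: "finite {u :: bool list. length u < n}"
  using finite_lists_length_le[of "UNIV :: bool set" n] by (rule finite_subset[rotated]) auto

lemma finite_TN: "finite (TN N)"
  unfolding TN_eq by (rule finite_lists_bool_length_less)

lemma card_lists_bool_length_eq: "card {u :: bool list. length u = n} = 2 ^ n"
  using card_lists_length_eq[of "UNIV :: bool set" n] by simp

lemma sum_lists_bool_length_less:
  fixes f :: "nat \<Rightarrow> 'a::comm_semiring_1"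
  shows "(\<Sum>u\<in>{u :: bool list. length u < n}. f (length u)) = (\<Sum>j<n. 2 ^ j * f j)"
proof (induction n)
  case 0
  then show ?case by simp
next
  case (Suc n)
  have "{u :: bool list. length u < Suc n} = {u. length u < n} \<union> {u. length u = n}" by auto
  moreover have "(\<Sum>u\<in>{u :: bool list. length u = n}. f (length u)) = 2 ^ n * f n"
    by (simp add: card_lists_bool_length_eq)
  ultimately show ?case
    using Suc finite_lists_bool_length_less finite_lists_bool_length_eq
    by (simp add: sum.union_disjoint disjoint_iff)
qed

lemma xN_eq:
  assumes "length t \<le> N"
  shows "xN N t = 2 ^ (N - length t)"
proof -
  have "{s. length s = N} \<inter> {s. t \<in> Fs s} = (\<lambda>u. t @ u) ` {u. length u = N - length t}"
  proof (rule set_eqI, rule iffI)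
    fix s assume "s \<in> {s. length s = N} \<inter> {s. t \<in> Fs s}"
    then have "s = t @ drop (length t) s" "length (drop (length t) s) = N - length t"
      by (auto simp: mem_Fs) (metis append_take_drop_id)
    then show "s \<in> (\<lambda>u. t @ u) ` {u. length u = N - length t}" by blast
  qed (use assms in \<open>auto simp: mem_Fs\<close>)
  moreover have "card ((\<lambda>u. t @ u) ` {u :: bool list. length u = N - length t}) = 2 ^ (N - length t)"
    by (subst card_image) (auto simp: inj_on_def card_lists_bool_length_eq)
  ultimately show ?thesis
    unfolding xN_def indicator_def using finite_lists_bool_length_eq by simp
qed

definition chain_weight :: "nat \<Rightarrow> nat \<Rightarrow> real" where
  "chain_weight N j = (if j < N then 2 ^ (N - Suc j) else 1)"

lemma sum_chain_weight: "k \<le> N \<Longrightarrow> (\<Sum>j\<in>{k..N}. chain_weight N j) = 2 ^ (N - k)"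
proof (induction k rule: inc_induct)
  case base
  then show ?case by (simp add: chain_weight_def)
next
  case (step k)
  then have "{k..N} = insert k {Suc k..N}" by auto
  then have "(\<Sum>j\<in>{k..N}. chain_weight N j) = 2 ^ (N - Suc k) + 2 ^ (N - Suc k)"
    using step by (simp add: chain_weight_def)
  also have "\<dots> = 2 ^ (N - k)"
    using step.hyps by (metis Suc_diff_Suc mult_2 power_Suc)
  finally show ?case .
qed

lemma two_pow_plus_level_sum:
  "2 ^ N + (\<Sum>j<N. (2::real) ^ j * 2 ^ (N - Suc j)) = 2 ^ N * (1 + real N / 2)"
proof -
  have "(\<Sum>j<N. (2::real) ^ j * 2 ^ (N - Suc j)) = (\<Sum>j<N. 2 ^ N / 2)"
  proof (rule sum.cong)
    fix j assume "j \<in> {..<N}"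
    then have "Suc (j + (N - Suc j)) = N" by auto
    then have "(2::real) ^ j * 2 ^ (N - Suc j) * 2 = 2 ^ N"
      by (metis power_Suc2 power_add)
    then show "(2::real) ^ j * 2 ^ (N - Suc j) = 2 ^ N / 2" by simp
  qed simp
  then show ?thesis by (simp add: field_simps)
qed

lemma sum_chain_weight_TN: "(\<Sum>t\<in>TN N. chain_weight N (length t)) = 2 ^ N * (1 + real N / 2)"
proof -
  have "(\<Sum>t\<in>TN N. chain_weight N (length t)) = (\<Sum>j<Suc N. 2 ^ j * chain_weight N j)"
    unfolding TN_eq by (rule sum_lists_bool_length_less)
  also have "\<dots> = (\<Sum>j<N. 2 ^ j * 2 ^ (N - Suc j)) + 2 ^ N"
    by (simp add: chain_weight_def)
  finally show ?thesis using two_pow_plus_level_sum[of N] by linarith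
qed

lemma sum_chain_weight_le_supabs:
  assumes "length s = N" "A \<subseteq> Fs s" "A \<noteq> {}"
  shows "(\<Sum>t\<in>A. chain_weight N (length t)) \<le> supabs (xN N) A"
proof -
  have finA: "finite A" using assms(2) finite_Fs by (rule finite_subset)
  have "Min (length ` A) \<in> length ` A" using finA assms(3) by simp
  then obtain t0 where t0: "t0 \<in> A" "length t0 = Min (length ` A)" by auto
  have len_le: "length t \<le> N" if "t \<in> A" for t
    using that assms(1,2) Fs_subset_TN unfolding TN_def by blast
  have "inj_on length A"
    using assms(2) by (auto simp: inj_on_def mem_Fs) (metis subsetD mem_Fs)
  then have "(\<Sum>t\<in>A. chain_weight N (length t)) = (\<Sum>j\<in>length ` A. chain_weight N j)"
    by (simp add: sum.reindex)
  also have "\<dots> \<le> (\<Sum>j\<in>{length t0..N}. chain_weight N j)"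
    by (rule sum_mono2) (use finA t0 len_le in \<open>auto simp: chain_weight_def\<close>)
  also have "\<dots> = xN N t0"
    using sum_chain_weight xN_eq len_le[OF t0(1)] by simp
  also have "\<dots> \<le> supabs (xN N) A"
    using abs_le_supabs[OF finA t0(1), of "xN N"] by (meson abs_ge_self order.trans)
  finally show ?thesis .
qed

lemma FamN_eq: "FamN N = {A. \<exists>s. length s = N \<and> A \<subseteq> Fs s}"
  unfolding FamN_def hered_closure_eq by blast

lemma hereditary_FamN: "hereditary (FamN N)"
  unfolding hereditary_def FamN_eq by blast

lemma Fs_in_FamN: "length s = N \<Longrightarrow> Fs s \<in> FamN N"
  unfolding FamN_eq by blast

lemma finite_FamN: "A \<in> FamN N \<Longrightarrow> finite A"
  unfolding FamN_eq using finite_Fs finite_subset by blast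

lemma covers_FamN: "covers (TN N) (FamN N)"
  unfolding covers_def FamN_eq using Fs_subset_TN TN_subset_Union_Fs by blast

lemma upper_norm_xN_ge: "ennreal (2 ^ N * (1 + real N / 2)) \<le> upper_norm (TN N) (FamN N) (xN N)"
proof -
  have "ennreal (\<Sum>t\<in>TN N. chain_weight N (length t)) \<le> upper_norm (TN N) (FamN N) (xN N)"
  proof (rule upper_norm_ge_weight_sum[OF finite_TN order.refl])
    fix A assume "A \<in> FamN N" "A \<inter> TN N \<noteq> {}"
    then obtain s where s: "length s = N" "A \<subseteq> Fs s" unfolding FamN_eq by blast
    then have "A \<inter> TN N = A" using Fs_subset_TN by blast
    then show "(\<Sum>t\<in>A \<inter> TN N. chain_weight N (length t)) \<le> supabs (xN N) A"
      using sum_chain_weight_le_supabs[OF s] \<open>A \<inter> TN N \<noteq> {}\<close> by simp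
  qed (simp add: chain_weight_def)
  then show ?thesis by (simp only: sum_chain_weight_TN)
qed

definition strip_false :: "bool list \<Rightarrow> bool list" where
  "strip_false v = rev (dropWhile Not (rev v))"

lemma strip_false_append_replicate: "\<exists>j. v = strip_false v @ replicate j False"
proof -
  let ?zeros = "takeWhile Not (rev v)"
  have "?zeros = replicate (length ?zeros) False"
    by (rule replicate_length_same[symmetric]) (auto dest: set_takeWhileD)
  then have "v = strip_false v @ replicate (length ?zeros) False"
    unfolding strip_false_def
    by (metis rev_append rev_replicate rev_rev_ident takeWhile_dropWhile_id)
  then show ?thesis by blast
qed

lemma length_strip_false_le: "length (strip_false v) \<le> length v"
  by (metis le_add1 length_append strip_false_append_replicate)

lemma strip_false_Nil_or_last: "strip_false v = [] \<or> last (strip_false v)"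
proof (cases "dropWhile Not (rev v) = []")
  case False
  then have "hd (dropWhile Not (rev v))" using hd_dropWhile[of Not "rev v"] by blast
  then show ?thesis using False unfolding strip_false_def by (simp add: last_rev)
next
  case True
  then show ?thesis unfolding strip_false_def by (simp only: rev.simps(1)) simp
qed

definition stripped_lists :: "nat \<Rightarrow> bool list set" where
  "stripped_lists N = insert [] ((\<lambda>u. u @ [True]) ` {u. length u < N})"

lemma strip_false_in_stripped_lists:
  assumes "length v \<le> N"
  shows "strip_false v \<in> stripped_lists N"
proof (cases "strip_false v" rule: rev_cases)
  case (snoc u b)
  then have "b" "length u < N"
    using strip_false_Nil_or_last[of v] length_strip_false_le[of v] assms by auto
  then have "strip_false v = u @ [True]" using snoc by simp
  then show ?thesis using \<open>length u < N\<close> unfolding stripped_lists_def by blast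
qed (simp add: stripped_lists_def)

lemma sum_pow_stripped_lists:
  "(\<Sum>t\<in>stripped_lists N. (2::real) ^ (N - length t)) = 2 ^ N * (1 + real N / 2)"
proof -
  have "(\<Sum>t\<in>stripped_lists N. (2::real) ^ (N - length t))
      = 2 ^ N + (\<Sum>t\<in>(\<lambda>u. u @ [True]) ` {u. length u < N}. 2 ^ (N - length t))"
    unfolding stripped_lists_def using finite_lists_bool_length_less by (subst sum.insert) auto
  also have "(\<Sum>t\<in>(\<lambda>u. u @ [True]) ` {u. length u < N}. (2::real) ^ (N - length t))
      = (\<Sum>u\<in>{u :: bool list. length u < N}. 2 ^ (N - Suc (length u)))"
    by (subst sum.reindex) (auto simp: inj_on_def)
  also have "\<dots> = (\<Sum>j<N. 2 ^ j * 2 ^ (N - Suc j))"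
    by (rule sum_lists_bool_length_less)
  finally show ?thesis using two_pow_plus_level_sum[of N] by linarith
qed

lemma strip_false_fiber_subset_Fs:
  "{v \<in> TN N. strip_false v = t} \<subseteq> Fs (t @ replicate (N - length t) False)"
proof
  fix v assume v: "v \<in> {v \<in> TN N. strip_false v = t}"
  then obtain j where "v = t @ replicate j False" using strip_false_append_replicate by blast
  moreover have "length v \<le> N" using v unfolding TN_def by simp
  ultimately show "v \<in> Fs (t @ replicate (N - length t) False)"
    by (simp add: mem_Fs min_def)
qed

lemma upper_norm_xN_le: "upper_norm (TN N) (FamN N) (xN N) \<le> ennreal (2 ^ N * (1 + real N / 2))"
proof -
  let ?fiber = "\<lambda>t. {v \<in> TN N. strip_false v = t}"
  have fiber_in_FamN: "?fiber t \<in> FamN N" if "t \<in> strip_false ` TN N" for t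
  proof -
    have "length t \<le> N"
      using that length_strip_false_le unfolding TN_def by (auto intro: order.trans)
    then show ?thesis using strip_false_fiber_subset_Fs unfolding FamN_eq
      by (intro CollectI exI[of _ "t @ replicate (N - length t) False"]) simp
  qed
  have fiber_bound: "supabs (xN N) (?fiber t) \<le> 2 ^ (N - length t)" for t
  proof (rule supabs_le)
    fix v assume "v \<in> ?fiber t"
    then have "length t \<le> length v" "length v \<le> N"
      using length_strip_false_le unfolding TN_def by auto
    then show "\<bar>xN N v\<bar> \<le> 2 ^ (N - length t)" by (simp add: xN_eq)
  qed (simp_all add: finite_TN)
  have "(\<Sum>t\<in>strip_false ` TN N. supabs (xN N) (?fiber t))
      \<le> (\<Sum>t\<in>strip_false ` TN N. 2 ^ (N - length t))"
    by (rule sum_mono) (rule fiber_bound)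
  also have "\<dots> \<le> (\<Sum>t\<in>stripped_lists N. 2 ^ (N - length t))"
    by (rule sum_mono2)
      (use finite_lists_bool_length_less strip_false_in_stripped_lists
        in \<open>auto simp: TN_def stripped_lists_def\<close>)
  also have "\<dots> = 2 ^ N * (1 + real N / 2)" by (rule sum_pow_stripped_lists)
  finally have "ennreal (\<Sum>t\<in>strip_false ` TN N. supabs (xN N) (?fiber t))
      \<le> ennreal (2 ^ N * (1 + real N / 2))" by (rule ennreal_leI)
  moreover have "upper_norm (TN N) (FamN N) (xN N)
      \<le> ennreal (\<Sum>t\<in>strip_false ` TN N. supabs (xN N) (?fiber t))"
    by (rule upper_norm_le_fibers)
      (use finite_TN fiber_in_FamN Fs_in_FamN[of "replicate N False"] in \<open>auto simp: FamN_eq\<close>)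
  ultimately show ?thesis by (rule order.trans[rotated])
qed

lemma upper_norm_xN: "upper_norm (TN N) (FamN N) (xN N) = ennreal (2 ^ N * (1 + real N / 2))"
  using upper_norm_xN_le upper_norm_xN_ge by (rule antisym)

section \<open>The disjoint union of the trees\<close>

lemma Famall_eq: "Famall = {A. \<exists>N s. length s = N \<and> A \<subseteq> {N} \<times> Fs s}"
proof -
  have "A \<in> Famall \<longleftrightarrow> (\<exists>N s. length s = N \<and> A \<subseteq> {N} \<times> Fs s)" for A
  proof
    assume "A \<in> Famall"
    then show "\<exists>N s. length s = N \<and> A \<subseteq> {N} \<times> Fs s"
      unfolding Famall_def FamN_eq by auto
  next
    assume "\<exists>N s. length s = N \<and> A \<subseteq> {N} \<times> Fs s"
    then obtain N s where "length s = N" "A \<subseteq> {N} \<times> Fs s" by blast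
    then have "A = Pair N ` snd ` A" "snd ` A \<in> FamN N" unfolding FamN_eq by force+
    then show "A \<in> Famall" unfolding Famall_def by blast
  qed
  then show ?thesis by blast
qed

lemma hereditary_Famall: "hereditary Famall"
  unfolding hereditary_def Famall_eq by blast

lemma finite_Famall: "A \<in> Famall \<Longrightarrow> finite A"
  unfolding Famall_eq by (auto intro: finite_subset[OF _ finite_SigmaI[OF _ finite_Fs]])

lemma Times_Fs_subset_Tall: "length s = N \<Longrightarrow> {N} \<times> Fs s \<subseteq> Tall"
  unfolding Tall_def using Fs_subset_TN by blast

lemma covers_Tall_Famall: "covers Tall Famall"
proof -
  have "A \<subseteq> Tall" if "A \<in> Famall" for A
    using that Times_Fs_subset_Tall unfolding Famall_eq by blast
  moreover have "p \<in> \<Union>Famall" if p_Tall: "p \<in> Tall" for p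
  proof -
    obtain N t where p: "p = (N, t)" "t \<in> TN N" using p_Tall unfolding Tall_def by blast
    then obtain s where "length s = N" "t \<in> Fs s" using TN_subset_Union_Fs by blast
    then have "{p} \<in> Famall" using p unfolding Famall_eq by blast
    then show ?thesis by blast
  qed
  ultimately show ?thesis unfolding covers_def by blast
qed

text \<open>A set of nodes outside \<open>Famall\<close> either meets two different trees, and then so does a
  two-element subset, or lies in a single finite tree.\<close>

lemma compact_family_Famall: "compact_family Tall Famall"
proof (rule compact_family_if_finite_character[OF hereditary_Famall])
  fix A assume A: "A \<subseteq> Tall" "A \<notin> Famall"
  show "\<exists>B. finite B \<and> B \<subseteq> A \<and> B \<notin> Famall"
  proof (cases "\<exists>p\<in>A. \<exists>q\<in>A. fst p \<noteq> fst q")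
    case True
    then obtain p q where pq: "p \<in> A" "q \<in> A" "fst p \<noteq> fst q" by blast
    then have "{p, q} \<notin> Famall" unfolding Famall_eq by auto
    then show ?thesis using pq by (intro exI[of _ "{p, q}"]) simp
  next
    case single_tree: False
    have "finite A"
    proof (cases "A = {}")
      case False
      then obtain p where p: "p \<in> A" by blast
      have "A \<subseteq> {fst p} \<times> TN (fst p)"
      proof
        fix q assume q: "q \<in> A"
        then have "fst q = fst p" using single_tree p by blast
        moreover have "q \<in> Tall" using q A(1) by blast
        then have "snd q \<in> TN (fst q)" unfolding Tall_def by (cases q) simp
        ultimately show "q \<in> {fst p} \<times> TN (fst p)" by (cases q) simp
      qed
      then show ?thesis by (rule finite_subset) (simp add: finite_TN)
    qed simp
    then show ?thesis using A(2) by (intro exI[of _ A]) simp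
  qed
qed

definition embed_tree :: "nat \<Rightarrow> ('a \<Rightarrow> real) \<Rightarrow> nat \<times> 'a \<Rightarrow> real" where
  "embed_tree N x k = (if fst k = N then x (snd k) else 0)"

lemma upper_norm_embed_tree_xN_ge:
  "ennreal (2 ^ N * (1 + real N / 2)) \<le> upper_norm Tall Famall (embed_tree N (xN N))"
proof -
  let ?J = "{N} \<times> TN N"
  have "?J = Pair N ` TN N" by auto
  then have "(\<Sum>v\<in>?J. chain_weight N (length (snd v))) = (\<Sum>t\<in>TN N. chain_weight N (length t))"
    by (simp add: sum.reindex inj_on_def)
  also have "\<dots> = 2 ^ N * (1 + real N / 2)" by (rule sum_chain_weight_TN)
  finally have "(\<Sum>v\<in>?J. chain_weight N (length (snd v))) = 2 ^ N * (1 + real N / 2)" .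
  moreover have "ennreal (\<Sum>v\<in>?J. chain_weight N (length (snd v))) \<le> upper_norm Tall Famall (embed_tree N (xN N))"
  proof (rule upper_norm_ge_weight_sum)
    show "finite ?J" using finite_TN by simp
    show "?J \<subseteq> Tall" unfolding Tall_def by blast
    fix A assume A: "A \<in> Famall" "A \<inter> ?J \<noteq> {}"
    then obtain s where s: "length s = N" "A \<subseteq> {N} \<times> Fs s" unfolding Famall_eq by blast
    then have AJ: "A \<inter> ?J = A" using Fs_subset_TN by blast
    have "inj_on snd A" using s(2) by (auto simp: inj_on_def)
    then have "(\<Sum>v\<in>A. chain_weight N (length (snd v))) = (\<Sum>t\<in>snd ` A. chain_weight N (length t))"
      by (simp add: sum.reindex)
    also have "\<dots> \<le> supabs (xN N) (snd ` A)"
    proof (rule sum_chain_weight_le_supabs[OF s(1)])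
      show "snd ` A \<subseteq> Fs s" using s(2) by force
      show "snd ` A \<noteq> {}" using A(2) by blast
    qed
    also have "\<dots> = supabs (embed_tree N (xN N)) A"
      using s(2) by (intro supabs_image[symmetric]) (auto simp: embed_tree_def)
    finally show "(\<Sum>v\<in>A \<inter> ?J. chain_weight N (length (snd v))) \<le> supabs (embed_tree N (xN N)) A"
      unfolding AJ .
  qed (simp add: chain_weight_def)
  ultimately show ?thesis by simp
qed

definition upper_norm_C_subadditive :: "'i set \<Rightarrow> 'i set set \<Rightarrow> real \<Rightarrow> bool" where
  "upper_norm_C_subadditive I Fam C \<longleftrightarrow>
     (\<forall>(n::nat) xs. (\<forall>i\<le>n. xs i \<in> c00 I) \<longrightarrow>
        upper_norm I Fam (\<lambda>k. \<Sum>i\<le>n. xs i k) \<le> ennreal C * (\<Sum>i\<le>n. upper_norm I Fam (xs i)))"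

lemma upper_norm_C_subadditive_finite_sum:
  assumes "upper_norm_C_subadditive I Fam C" "finite S" "S \<noteq> {}" "\<And>s. s \<in> S \<Longrightarrow> x s \<in> c00 I"
  shows "upper_norm I Fam (\<lambda>k. \<Sum>s\<in>S. x s k) \<le> ennreal C * (\<Sum>s\<in>S. upper_norm I Fam (x s))"
proof -
  obtain h where h: "bij_betw h {..<card S} S"
    using ex_bij_betw_nat_finite[OF assms(2)] by (auto simp: atLeast0LessThan)
  define n where "n = card S - 1"
  have "card S > 0" using assms(2,3) by (simp add: card_gt_0_iff)
  then have n: "{..n} = {..<card S}" unfolding n_def by auto
  have "\<forall>i\<le>n. x (h i) \<in> c00 I"
  proof (intro allI impI)
    fix i assume "i \<le> n"
    then have "i \<in> {..<card S}" using n by auto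
    then show "x (h i) \<in> c00 I" using h assms(4) bij_betwE by blast
  qed
  then have "upper_norm I Fam (\<lambda>k. \<Sum>i\<le>n. x (h i) k) \<le> ennreal C * (\<Sum>i\<le>n. upper_norm I Fam (x (h i)))"
    using assms(1)[unfolded upper_norm_C_subadditive_def, rule_format, of n "\<lambda>i. x (h i)"] by blast
  moreover have "(\<lambda>k. \<Sum>i<card S. x (h i) k) = (\<lambda>k. \<Sum>s\<in>S. x s k)"
    by (rule ext) (rule sum.reindex_bij_betw[OF h])
  moreover have "(\<Sum>i<card S. upper_norm I Fam (x (h i))) = (\<Sum>s\<in>S. upper_norm I Fam (x s))"
    by (rule sum.reindex_bij_betw[OF h])
  ultimately show ?thesis unfolding n by simp
qed

lemma not_upper_norm_C_subadditive_Famall: "\<not> upper_norm_C_subadditive Tall Famall C"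
proof
  assume C: "upper_norm_C_subadditive Tall Famall C"
  obtain N :: nat where N: "2 * C < real N" using reals_Archimedean2 by blast
  define S where "S = {s :: bool list. length s = N}"
  have finite_S: "finite S" unfolding S_def by (rule finite_lists_bool_length_eq)
  have "replicate N False \<in> S" unfolding S_def by simp
  then have S_ne: "S \<noteq> {}" by blast
  have c00: "indicator ({N} \<times> Fs s) \<in> c00 Tall" if "s \<in> S" for s
  proof -
    have "{k. indicator ({N} \<times> Fs s) k \<noteq> (0::real)} = {N} \<times> Fs s" by (auto simp: indicator_def)
    then show ?thesis using that Times_Fs_subset_Tall[of s N] finite_Fs unfolding c00_def S_def by simp
  qed
  have norm_1: "upper_norm Tall Famall (indicator ({N} \<times> Fs s)) = 1" if "s \<in> S" for s
    using that Nil_in_Fs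
    by (intro upper_norm_indicator hereditary_Famall covers_Tall_Famall)
      (auto simp: finite_Famall Famall_eq S_def)
  have sum: "(\<lambda>k. \<Sum>s\<in>S. indicator ({N} \<times> Fs s) k) = embed_tree N (xN N)"
    by (auto simp: embed_tree_def xN_def S_def indicator_def)
  have "ennreal (2 ^ N * (1 + real N / 2)) \<le> upper_norm Tall Famall (embed_tree N (xN N))"
    by (rule upper_norm_embed_tree_xN_ge)
  also have "\<dots> \<le> ennreal C * (\<Sum>s\<in>S. upper_norm Tall Famall (indicator ({N} \<times> Fs s)))"
    unfolding sum[symmetric]
    by (rule upper_norm_C_subadditive_finite_sum[OF C finite_S S_ne c00])
  also have "\<dots> = ennreal (C * 2 ^ N)"
    using norm_1 by (simp add: ennreal_mult'' S_def card_lists_bool_length_eq ennreal_of_nat_eq_real_of_nat)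
  finally have le: "ennreal (2 ^ N * (1 + real N / 2)) \<le> ennreal (C * 2 ^ N)" .
  have pos: "0 < 2 ^ N * (1 + real N / 2)" by (simp add: add_pos_nonneg)
  have "2 ^ N * (1 + real N / 2) \<le> C * 2 ^ N"
    using le pos unfolding ennreal_le_iff2 by (elim disjE conjE) linarith+
  then have "1 + real N / 2 \<le> C" by simp
  then show False using N by linarith
qed

section \<open>Isomorphisms onto the dual\<close>

lemma c00_sum:
  assumes "finite S" "\<And>i. i \<in> S \<Longrightarrow> x i \<in> c00 I"
  shows "(\<lambda>k. \<Sum>i\<in>S. x i k) \<in> c00 I"
proof -
  have "{k. (\<Sum>i\<in>S. x i k) \<noteq> 0} \<subseteq> (\<Union>i\<in>S. {k. x i k \<noteq> 0})"
    by (auto intro: ccontr simp: sum.neutral)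
  moreover have "finite (\<Union>i\<in>S. {k. x i k \<noteq> 0})" "(\<Union>i\<in>S. {k. x i k \<noteq> 0}) \<subseteq> I"
    using assms unfolding c00_def by auto
  ultimately show ?thesis unfolding c00_def by (auto intro: finite_subset)
qed

lemma linear_on_c00_sum:
  assumes lin: "\<forall>x\<in>c00 I. \<forall>y\<in>c00 I. \<forall>a b::real. T (\<lambda>k. a * x k + b * y k) = (\<lambda>k. a * T x k + b * T y k)"
    and "finite S" "\<And>i. i \<in> S \<Longrightarrow> x i \<in> c00 I"
  shows "T (\<lambda>k. \<Sum>i\<in>S. x i k) = (\<lambda>k. \<Sum>i\<in>S. T (x i) k)"
  using assms(2,3)
proof (induction S rule: finite_induct)
  case empty
  have "(\<lambda>k. 0) \<in> c00 I" by (simp add: c00_def)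
  then show ?case using lin[rule_format, of "\<lambda>k. 0" "\<lambda>k. 0" 0 0] by simp
next
  case (insert i S)
  have "(\<lambda>k. \<Sum>j\<in>S. x j k) \<in> c00 I" using insert by (intro c00_sum) auto
  moreover have "x i \<in> c00 I" using insert by simp
  ultimately show ?case using insert lin[rule_format, of "x i" "\<lambda>k. \<Sum>j\<in>S. x j k" 1 1] by simp
qed

lemma dual_norm_add: "dual_norm I Fam (\<lambda>k. y k + z k) \<le> dual_norm I Fam y + dual_norm I Fam z"
  unfolding dual_norm_def
proof (rule SUP_least)
  fix x assume x: "x \<in> {x \<in> c00 I. lower_norm Fam x \<le> 1}"
  let ?Z = "{k. x k \<noteq> 0}"
  have "\<bar>\<Sum>k\<in>?Z. x k * (y k + z k)\<bar> \<le> \<bar>\<Sum>k\<in>?Z. x k * y k\<bar> + \<bar>\<Sum>k\<in>?Z. x k * z k\<bar>"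
    by (simp add: distrib_left sum.distrib abs_triangle_ineq)
  then have "ennreal \<bar>\<Sum>k\<in>?Z. x k * (y k + z k)\<bar>
      \<le> ennreal \<bar>\<Sum>k\<in>?Z. x k * y k\<bar> + ennreal \<bar>\<Sum>k\<in>?Z. x k * z k\<bar>"
    by (simp add: ennreal_plus[symmetric] ennreal_leI del: ennreal_plus)
  also have "\<dots> \<le> (SUP x\<in>{x \<in> c00 I. lower_norm Fam x \<le> 1}. ennreal \<bar>\<Sum>k\<in>{k. x k \<noteq> 0}. x k * y k\<bar>)
      + (SUP x\<in>{x \<in> c00 I. lower_norm Fam x \<le> 1}. ennreal \<bar>\<Sum>k\<in>{k. x k \<noteq> 0}. x k * z k\<bar>)"
    by (intro add_mono SUP_upper x)
  finally show "ennreal \<bar>\<Sum>k\<in>?Z. x k * (y k + z k)\<bar> \<le> \<dots>" .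
qed

lemma dual_norm_sum:
  "finite S \<Longrightarrow> dual_norm I Fam (\<lambda>k. \<Sum>i\<in>S. y i k) \<le> (\<Sum>i\<in>S. dual_norm I Fam (y i))"
proof (induction S rule: finite_induct)
  case empty
  then show ?case by (simp add: dual_norm_def) (metis SUP_bot bot_ennreal)
next
  case (insert i S)
  then have "dual_norm I Fam (\<lambda>k. \<Sum>j\<in>insert i S. y j k)
      = dual_norm I Fam (\<lambda>k. y i k + (\<Sum>j\<in>S. y j k))" by simp
  also have "\<dots> \<le> dual_norm I Fam (y i) + dual_norm I Fam (\<lambda>k. \<Sum>j\<in>S. y j k)"
    by (rule dual_norm_add)
  also have "\<dots> \<le> dual_norm I Fam (y i) + (\<Sum>j\<in>S. dual_norm I Fam (y j))"
    using insert.IH by (rule add_left_mono)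
  finally show ?case using insert by simp
qed

lemma upper_iso_dual_imp_C_subadditive:
  assumes "upper_iso_dual I Fam"
  shows "\<exists>C. upper_norm_C_subadditive I Fam C"
proof -
  obtain T c C where c: "c > 0"
    and lin: "\<forall>x\<in>c00 I. \<forall>y\<in>c00 I. \<forall>a b::real. T (\<lambda>k. a * x k + b * y k) = (\<lambda>k. a * T x k + b * T y k)"
    and bounds: "\<forall>x\<in>c00 I. ennreal c * upper_norm I Fam x \<le> dual_norm I Fam (T x)
                 \<and> dual_norm I Fam (T x) \<le> ennreal C * upper_norm I Fam x"
    using assms unfolding upper_iso_dual_def by blast
  have "upper_norm_C_subadditive I Fam (C / c)"
    unfolding upper_norm_C_subadditive_def
  proof (intro allI impI)
    fix n :: nat and xs assume xs: "\<forall>i\<le>n. xs i \<in> c00 I"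
    let ?S = "\<lambda>k. \<Sum>i\<le>n. xs i k"
    have "ennreal c * upper_norm I Fam ?S \<le> dual_norm I Fam (T ?S)"
      using bounds c00_sum[of "{..n}" xs I] xs by simp
    also have "T ?S = (\<lambda>k. \<Sum>i\<le>n. T (xs i) k)"
      using linear_on_c00_sum[OF lin, of "{..n}" xs] xs by simp
    also have "dual_norm I Fam \<dots> \<le> (\<Sum>i\<le>n. dual_norm I Fam (T (xs i)))"
      by (rule dual_norm_sum) simp
    also have "\<dots> \<le> (\<Sum>i\<le>n. ennreal C * upper_norm I Fam (xs i))"
      by (rule sum_mono) (use bounds xs in auto)
    finally have le: "ennreal c * upper_norm I Fam ?S \<le> ennreal C * (\<Sum>i\<le>n. upper_norm I Fam (xs i))"
      by (simp add: sum_distrib_left)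
    have "upper_norm I Fam ?S = ennreal (1 / c) * (ennreal c * upper_norm I Fam ?S)"
      using c by (simp add: mult.assoc[symmetric] ennreal_mult[symmetric])
    also have "\<dots> \<le> ennreal (1 / c) * (ennreal C * (\<Sum>i\<le>n. upper_norm I Fam (xs i)))"
      using le by (rule mult_left_mono) simp
    also have "\<dots> = ennreal (C / c) * (\<Sum>i\<le>n. upper_norm I Fam (xs i))"
      using c by (simp add: mult.assoc[symmetric] ennreal_mult'[symmetric])
    finally show "upper_norm I Fam ?S \<le> ennreal (C / c) * (\<Sum>i\<le>n. upper_norm I Fam (xs i))" .
  qed
  then show ?thesis by blast
qed

theorem mainTheorem12:
  shows "(\<forall>N. upper_norm (TN N) (FamN N) (xN N) = ennreal (2 ^ N * (1 + real N / 2))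
              \<and> (\<forall>s. length s = N \<longrightarrow> upper_norm (TN N) (FamN N) (indicator (Fs s)) = 1))
       \<and> (compact_family Tall Famall \<and> hereditary Famall \<and> (\<forall>A\<in>Famall. finite A)
              \<and> covers Tall Famall)
       \<and> \<not> (\<exists>C::real. C > 0 \<and>
               (\<forall>(n::nat) (xs::nat \<Rightarrow> nat \<times> bool list \<Rightarrow> real).
                  (\<forall>i\<le>n. xs i \<in> c00 Tall) \<longrightarrow>
                  upper_norm Tall Famall (\<lambda>k. \<Sum>i\<le>n. xs i k)
                    \<le> ennreal C * (\<Sum>i\<le>n. upper_norm Tall Famall (xs i))))
       \<and> \<not> upper_iso_dual Tall Famall"
  unfolding upper_norm_C_subadditive_def[symmetric]
proof (intro conjI allI impI)
  fix N
  show "upper_norm (TN N) (FamN N) (xN N) = ennreal (2 ^ N * (1 + real N / 2))"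
    by (rule upper_norm_xN)
next
  fix N s assume "length (s :: bool list) = N"
  then show "upper_norm (TN N) (FamN N) (indicator (Fs s)) = 1"
    using Nil_in_Fs
    by (intro upper_norm_indicator hereditary_FamN covers_FamN) (auto simp: finite_FamN Fs_in_FamN)
next
  show "\<not> (\<exists>C>0. upper_norm_C_subadditive Tall Famall C)"
    using not_upper_norm_C_subadditive_Famall by blast
  show "\<not> upper_iso_dual Tall Famall"
    using upper_iso_dual_imp_C_subadditive not_upper_norm_C_subadditive_Famall by blast
next
  show "compact_family Tall Famall" by (rule compact_family_Famall)
  show "hereditary Famall" by (rule hereditary_Famall)
  show "\<forall>A\<in>Famall. finite A" using finite_Famall by blast
  show "covers Tall Famall" by (rule covers_Tall_Famall)
qed

end
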